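(* With $T_{2,n,q}$ as defined below, as $n\to\infty$, $$|T_{2,n,q}|=\begin{cases}O(n^{-1}) & q\in[-1,0),\\ O(n^{-1}\log n) & q=0,\\ O(n^{q-1}) & q\in(0,1).\end{cases}$$
   Context: For $q\in[-1,1)$ and $k\ge1$: $H(k,q):=\frac{k}{2q-1}\Big(\frac{\Gamma(k+2q)}{\Gamma(k+1)\Gamma(2q)}-1\Big)$ if $q\ne\frac12$ (where $\frac{\Gamma(k+2q)}{\Gamma(2q)}$ means the Pochhammer product $2q(2q+1)\cdots(2q+k-1)$), and $H(k,\tfrac12):=k\sum_{j=1}^k\frac1j$. Also $I(k,q):=\frac{\Gamma(k+1)}{\Gamma(k+q)\Gamma(1-q)}$, with the convention $1/\Gamma(0)=0$. Define $$T_{2,n,q}:=\int_0^1\frac{u^{n+q}(1-u)^{-q}}{1+u}\,du\ \sum_{k=1}^n(-1)^{n-k}\frac{H(k,q)I(k,q)}{k^2}.$$ *)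

theory Defs
  imports "HOL-Analysis.Analysis" "HOL-Library.Landau_Symbols"
begin

text \<open>H(k,q). For q \<noteq> 1/2, Gamma(k+2q)/(Gamma(k+1)Gamma(2q)) is read as the
  Pochhammer product (2q)_k / k!.\<close>
definition Hkq :: "nat \<Rightarrow> real \<Rightarrow> real" where
  "Hkq k q = (if q = 1/2 then real k * (\<Sum>j=1..k. 1 / real j)
              else real k / (2*q - 1) * (pochhammer (2*q) k / fact k - 1))"

text \<open>I(k,q) = Gamma(k+1) / (Gamma(k+q) Gamma(1-q)), with 1/Gamma(0) = 0
  (rGamma is the reciprocal Gamma function, rGamma 0 = 0).\<close>
definition Ikq :: "nat \<Rightarrow> real \<Rightarrow> real" where
  "Ikq k q = fact k * rGamma (real k + q) * rGamma (1 - q)"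

definition T2 :: "nat \<Rightarrow> real \<Rightarrow> real" where
  "T2 n q = integral {0..1} (\<lambda>u. u powr (real n + q) * (1 - u) powr (- q) / (1 + u))
            * (\<Sum>k=1..n. (-1) ^ (n - k) * Hkq k q * Ikq k q / (real k)^2)"

end

theory Submission
  imports Defs "HOL-Real_Asymp.Real_Asymp"
begin

text \<open>
  T2 n q is the product of J_n = integral of u^(n+q) (1-u)^(-q) / (1+u) over [0,1] and the
  alternating sum S_n = sum of (-1)^(n-k) a_k, where a_k = H(k,q) I(k,q) / k^2.
  Since 1/(1+u) <= 1, J_n is at most the Beta integral B(n+q+1, 1-q) = O(n^(q-1)).
  An alternating sum is bounded by |a_1| plus the total variation of (a_k).
  Writing a_k = (H(k,q)/k) (I(k,q)/k), both factors satisfy first-order recurrences,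
  which give a_(k+1) - a_k = I(k+1,q)/(k+1) ((2q)_k/(k+1)! - q H(k,q)/k^2), and
  I(k+1,q)/(k+1) = k! / (Gamma(k+1+q) Gamma(1-q)) = O(k^(-q)).
  For q < 0 the factor H(k,q)/k is bounded, so the increments are O(k^(-q-1)) and S_n = O(n^(-q));
  for 0 <= q < 1 they are summable, so S_n = O(1) (which even gives O(1/n) for q = 0).
\<close>

lemma pochhammer_over_fact_bigo:
  fixes z :: real
  shows "(\<lambda>n. pochhammer z n / fact n) \<in> O(\<lambda>n. real n powr (z - 1))"
proof -
  have ev: "eventually (\<lambda>n. rGamma_series z n * (real n powr z / (z + real n))
                              = pochhammer z n / fact n) at_top"
    using eventually_gt_at_top[of "nat \<lceil>-z\<rceil>"]
  proof eventually_elim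
    case (elim n)
    then have "real n > 0" "z + real n \<noteq> 0" by linarith+
    then show ?case by (simp add: rGamma_series_def pochhammer_Suc powr_def)
  qed
  have "rGamma_series z \<in> O(\<lambda>_. 1)"
    by (intro bigoI_tendsto[where c = "rGamma z"]) (auto intro: rGamma_series_LIMSEQ)
  moreover have "(\<lambda>n. real n powr z / (z + real n)) \<in> O(\<lambda>n. real n powr (z - 1))"
    by real_asymp
  ultimately have "(\<lambda>n. rGamma_series z n * (real n powr z / (z + real n)))
                     \<in> O(\<lambda>n. 1 * real n powr (z - 1))"
    by (rule landau_o.big.mult)
  then show ?thesis using landau_o.big.in_cong[OF ev] by simp
qed

lemma fact_over_pochhammer_bigo:
  fixes z :: real
  shows "(\<lambda>n. fact n / pochhammer z n) \<in> O(\<lambda>n. real n powr (1 - z))"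
proof -
  have ev: "eventually (\<lambda>n. Gamma_series z n * ((z + real n) / real n powr z)
                              = fact n / pochhammer z n) at_top"
    using eventually_gt_at_top[of "nat \<lceil>-z\<rceil>"]
  proof eventually_elim
    case (elim n)
    then have "real n > 0" "z + real n \<noteq> 0" by linarith+
    then show ?case by (simp add: Gamma_series_def pochhammer_Suc powr_def)
  qed
  have "Gamma_series z \<in> O(\<lambda>_. 1)"
    by (intro bigoI_tendsto[where c = "Gamma z"]) (auto intro: Gamma_series_LIMSEQ)
  moreover have "(\<lambda>n. (z + real n) / real n powr z) \<in> O(\<lambda>n. real n powr (1 - z))"
    by real_asymp
  ultimately have "(\<lambda>n. Gamma_series z n * ((z + real n) / real n powr z))
                     \<in> O(\<lambda>n. 1 * real n powr (1 - z))"
    by (rule landau_o.big.mult)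
  then show ?thesis using landau_o.big.in_cong[OF ev] by simp
qed

lemma Gamma_times_rGamma_bigo_pos:
  fixes a b :: real
  assumes "a > 0" "b > 0"
  shows "(\<lambda>n. Gamma (real n + a) * rGamma (real n + b)) \<in> O(\<lambda>n. real n powr (a - b))"
proof -
  have eq: "Gamma (real n + a) * rGamma (real n + b)
              = Gamma a * rGamma b * ((pochhammer a n / fact n) * (fact n / pochhammer b n))" for n
  proof -
    have "a \<notin> \<int>\<^sub>\<le>\<^sub>0" using assms by (auto elim!: nonpos_Ints_cases)
    then have "Gamma (real n + a) = pochhammer a n * Gamma a"
      using pochhammer_Gamma[of a n] Gamma_nonzero[of a] by (simp add: field_simps add.commute)
    moreover have "rGamma b = pochhammer b n * rGamma (real n + b)"
      using pochhammer_rGamma[of b n] by (simp add: add.commute)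
    moreover have "pochhammer b n > 0" using assms by (intro pochhammer_pos)
    ultimately show ?thesis by (simp add: field_simps)
  qed
  have "(\<lambda>n. (pochhammer a n / fact n) * (fact n / pochhammer b n))
          \<in> O(\<lambda>n. real n powr (a - 1) * real n powr (1 - b))"
    by (intro landau_o.big.mult pochhammer_over_fact_bigo fact_over_pochhammer_bigo)
  moreover have "real n powr (a - 1) * real n powr (1 - b) = real n powr (a - b)" for n
    by (simp add: powr_add[symmetric])
  ultimately show ?thesis
    unfolding eq by (simp del: times_divide_eq_right times_divide_eq_left)
qed

lemma Gamma_times_rGamma_bigo:
  fixes a b :: real
  assumes "a > -1" "b > -1"
  shows "(\<lambda>n. Gamma (real n + a) * rGamma (real n + b)) \<in> O(\<lambda>n. real n powr (a - b))"
proof -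
  have ev: "eventually (\<lambda>n. Gamma (real n + (a + 1)) * rGamma (real n + (b + 1))
                              * ((real n + b) / (real n + a))
                            = Gamma (real n + a) * rGamma (real n + b)) at_top"
    using eventually_gt_at_top[of "0::nat"]
  proof eventually_elim
    case (elim n)
    then have "real n + a > 0" using assms by linarith
    then have "Gamma (real n + a + 1) = (real n + a) * Gamma (real n + a)"
      by (intro Gamma_plus1) (auto elim!: nonpos_Ints_cases)
    moreover have "rGamma (real n + b) = (real n + b) * rGamma (real n + b + 1)"
      by (simp add: rGamma_plus1)
    ultimately show ?case using \<open>real n + a > 0\<close> by (simp add: field_simps add.assoc)
  qed
  have "(\<lambda>n. Gamma (real n + (a + 1)) * rGamma (real n + (b + 1)))
          \<in> O(\<lambda>n. real n powr (a + 1 - (b + 1)))"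
    using assms by (intro Gamma_times_rGamma_bigo_pos) simp_all
  moreover have "(\<lambda>n. (real n + b) / (real n + a)) \<in> O(\<lambda>_. 1)"
    by real_asymp
  ultimately have "(\<lambda>n. Gamma (real n + (a + 1)) * rGamma (real n + (b + 1))
                          * ((real n + b) / (real n + a)))
                     \<in> O(\<lambda>n. real n powr (a + 1 - (b + 1)) * 1)"
    by (rule landau_o.big.mult)
  then show ?thesis using landau_o.big.in_cong[OF ev] by simp
qed

lemma abs_integral_Beta_integrand_div_le:
  fixes a b :: real
  assumes "a > 0" "b > 0"
  shows "\<bar>integral {0..1} (\<lambda>u. u powr (a - 1) * (1 - u) powr (b - 1) / (1 + u))\<bar> \<le> Beta a b"
proof -
  define g where "g u = u powr (a - 1) * (1 - u) powr (b - 1)" for u :: real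
  have g: "(g has_integral Beta a b) {0..1}"
    unfolding g_def using assms by (rule has_integral_Beta_real)
  have g_nonneg: "0 \<le> g u" for u
    by (simp add: g_def)
  have bounds: "0 \<le> g u / (1 + u)" "g u / (1 + u) \<le> g u" if "u \<in> {0..1}" for u
  proof -
    show "0 \<le> g u / (1 + u)"
      using that g_nonneg[of u] by simp
    have "g u / (1 + u) \<le> g u / 1"
      using that g_nonneg[of u] by (intro divide_left_mono) auto
    then show "g u / (1 + u) \<le> g u" by simp
  qed
  have "0 \<le> Beta a b"
    using g g_nonneg by (rule has_integral_nonneg)
  moreover have "\<bar>integral {0..1} (\<lambda>u. g u / (1 + u))\<bar> \<le> Beta a b"
    if "(\<lambda>u. g u / (1 + u)) integrable_on {0..1}"
  proof -
    have "0 \<le> integral {0..1} (\<lambda>u. g u / (1 + u))"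
      using that bounds by (intro integral_nonneg) auto
    moreover have "integral {0..1} (\<lambda>u. g u / (1 + u)) \<le> Beta a b"
      using that g bounds by (intro has_integral_le[OF integrable_integral[OF that] g]) auto
    ultimately show ?thesis by simp
  qed
  ultimately show ?thesis
    unfolding g_def[symmetric] by (cases "(\<lambda>u. g u / (1 + u)) integrable_on {0..1}")
      (simp_all add: not_integrable_integral)
qed

lemma abs_alternating_sum_le:
  fixes a :: "nat \<Rightarrow> real"
  shows "\<bar>\<Sum>k=1..n. (-1)^(n-k) * a k\<bar> \<le> \<bar>a 1\<bar> + (\<Sum>k=1..<n. \<bar>a (Suc k) - a k\<bar>)"
proof (induction n rule: nat_induct2)
  case (step n)
  have "(\<Sum>k=1..n. (-1)^(Suc (Suc n) - k) * a k) = (\<Sum>k=1..n. (-1)^(n-k) * a k)"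
    by (intro sum.cong) (auto simp: Suc_diff_le)
  then have alt: "(\<Sum>k=1..Suc (Suc n). (-1)^(Suc (Suc n) - k) * a k)
                    = (a (Suc (Suc n)) - a (Suc n)) + (\<Sum>k=1..n. (-1)^(n-k) * a k)"
    by (simp add: sum.cl_ivl_Suc)
  have "(\<Sum>k=1..<n. \<bar>a (Suc k) - a k\<bar>) + \<bar>a (Suc (Suc n)) - a (Suc n)\<bar>
          \<le> (\<Sum>k=1..<Suc (Suc n). \<bar>a (Suc k) - a k\<bar>)"
    by (cases n) (simp_all add: sum.atLeastLessThan_Suc)
  with step.IH show ?case
    unfolding add_2_eq_Suc' alt by linarith
qed simp_all

lemma alternating_sum_bigo:
  fixes a F :: "nat \<Rightarrow> real"
  assumes "(\<lambda>n. \<Sum>k=1..<n. \<bar>a (Suc k) - a k\<bar>) \<in> O(F)" and "(\<lambda>_. 1) \<in> O(F)"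
  shows "(\<lambda>n. \<Sum>k=1..n. (-1)^(n-k) * a k) \<in> O(F)"
proof -
  have "(\<lambda>n. \<Sum>k=1..n. (-1)^(n-k) * a k)
          \<in> O(\<lambda>n. \<bar>a 1\<bar> + (\<Sum>k=1..<n. \<bar>a (Suc k) - a k\<bar>))"
    using abs_alternating_sum_le[of _ a]
    by (intro landau_o.big_mono always_eventually allI) (simp add: sum_nonneg)
  also have "(\<lambda>_. \<bar>a 1\<bar>) \<in> O(F)"
    using assms(2) by (cases "a 1 = 0") simp_all
  then have "(\<lambda>n. \<bar>a 1\<bar> + (\<Sum>k=1..<n. \<bar>a (Suc k) - a k\<bar>)) \<in> O(F)"
    using assms(1) by (rule sum_in_bigo)
  finally show ?thesis .
qed

lemma sum_powr_le:
  fixes r :: real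
  assumes "0 < r" "r \<le> 1"
  shows "(\<Sum>k=1..n. real k powr (r - 1)) \<le> real n powr r / r"
proof (induction n)
  case (Suc n)
  have "real (Suc n) powr (r - 1) \<le> (real (Suc n) powr r - real n powr r) / r"
  proof (cases "n = 0")
    case False
    obtain z where z: "real n < z" "z < real n + 1"
      and mvt: "(real n + 1) powr r - real n powr r = (real n + 1 - real n) * (r * z powr (r - 1))"
      using False by (atomize_elim, intro MVT2) (auto intro!: has_real_derivative_powr)
    have "(real n + 1) powr (r - 1) \<le> z powr (r - 1)"
      using z False assms by (intro powr_mono2') auto
    with mvt assms show ?thesis by (simp add: field_simps add_ac)
  qed (use assms in simp)
  with Suc.IH show ?case
    by (simp add: diff_divide_distrib)
qed simp

lemma partial_sums_abs_bigo_powr: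
  fixes f :: "nat \<Rightarrow> real" and r :: real
  assumes "0 < r" "r \<le> 1" and f: "f \<in> O(\<lambda>k. real k powr (r - 1))"
  shows "(\<lambda>n. \<Sum>k=1..<n. \<bar>f k\<bar>) \<in> O(\<lambda>n. real n powr r)"
proof -
  obtain c where "c > 0" and "eventually (\<lambda>k. \<bar>f k\<bar> \<le> c * real k powr (r - 1)) at_top"
    using f by (elim landau_o.bigE) simp
  then obtain N where N: "\<And>k. k \<ge> N \<Longrightarrow> \<bar>f k\<bar> \<le> c * real k powr (r - 1)"
    by (auto simp: eventually_at_top_linorder)
  define K where "K = (\<Sum>k<N. \<bar>f k\<bar>)"
  have "(\<Sum>k=1..<n. \<bar>f k\<bar>) \<le> K + c / r * real n powr r" for n
  proof -
    have "(\<Sum>k=1..<n. \<bar>f k\<bar>)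
            \<le> (\<Sum>k=1..<n. (if k < N then \<bar>f k\<bar> else 0) + c * real k powr (r - 1))"
      using N \<open>c > 0\<close> by (intro sum_mono) (auto simp: not_less)
    also have "\<dots> = (\<Sum>k\<in>{1..<n} \<inter> {..<N}. \<bar>f k\<bar>)
                      + c * (\<Sum>k=1..<n. real k powr (r - 1))"
      by (simp add: sum.distrib sum_distrib_left sum.inter_restrict)
    also have "(\<Sum>k\<in>{1..<n} \<inter> {..<N}. \<bar>f k\<bar>) \<le> K"
      unfolding K_def by (intro sum_mono2) auto
    also have "(\<Sum>k=1..<n. real k powr (r - 1)) \<le> (\<Sum>k=1..n. real k powr (r - 1))"
      by (intro sum_mono2) auto
    also have "\<dots> \<le> real n powr r / r"
      using assms(1,2) by (rule sum_powr_le)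
    finally show ?thesis
      using \<open>c > 0\<close> by (simp add: mult_left_mono)
  qed
  then have "(\<lambda>n. \<Sum>k=1..<n. \<bar>f k\<bar>) \<in> O(\<lambda>n. K + c / r * real n powr r)"
    by (intro landau_o.big_mono always_eventually allI)
      (auto simp: sum_nonneg intro: order_trans[OF _ abs_ge_self])
  also have "(\<lambda>n. K + c / r * real n powr r) \<in> O(\<lambda>n. real n powr r)"
    using assms(1) by real_asymp
  finally show ?thesis .
qed

lemma partial_sums_abs_bounded:
  fixes f :: "nat \<Rightarrow> real"
  assumes "summable (\<lambda>k. \<bar>f k\<bar>)"
  shows "(\<lambda>n. \<Sum>k=1..<n. \<bar>f k\<bar>) \<in> O(\<lambda>_. 1)"
proof (intro bigoI always_eventually allI)
  fix n
  have "(\<Sum>k=1..<n. \<bar>f k\<bar>) \<le> (\<Sum>k<n. \<bar>f k\<bar>)"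
    by (intro sum_mono2) auto
  also have "\<dots> \<le> (\<Sum>k. \<bar>f k\<bar>)"
    using assms by (intro sum_le_suminf) auto
  finally show "norm (\<Sum>k=1..<n. \<bar>f k\<bar>) \<le> (\<Sum>k. \<bar>f k\<bar>) * norm (1::real)"
    by (simp add: sum_nonneg)
qed

definition T2_coeff :: "real \<Rightarrow> nat \<Rightarrow> real" where
  "T2_coeff q k = Hkq k q * Ikq k q / (real k)^2"

lemma Ikq_Suc: "(real k + q) * Ikq (Suc k) q = real (Suc k) * Ikq k q"
  using rGamma_plus1[of "real k + q"] by (simp add: Ikq_def algebra_simps)

lemma Hkq_over_k:
  "q \<noteq> 1/2 \<Longrightarrow> Hkq k q / real k = (pochhammer (2*q) k / fact k - 1) / (2*q - 1)"
  by (cases "k = 0") (simp_all add: Hkq_def)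

lemma Hkq_half_over_k: "Hkq k (1/2) / real k = harm k"
  by (simp add: Hkq_def harm_def inverse_eq_divide)

lemma Hkq_Suc_over_Suc:
  "Hkq (Suc k) q / real (Suc k) = Hkq k q / real k + pochhammer (2*q) k / fact (Suc k)"
proof (cases "q = 1/2")
  case True
  show ?thesis
    unfolding True Hkq_half_over_k harm_Suc
    by (simp add: pochhammer_fact[symmetric] inverse_eq_divide)
next
  case False
  then have q: "2*q - 1 \<noteq> 0" by simp
  define P where "P = pochhammer (2*q) k / fact k"
  have P_Suc: "pochhammer (2*q) (Suc k) / fact (Suc k) = P * (2*q + real k) / (real k + 1)"
    by (simp add: P_def pochhammer_rec' fact_Suc mult_ac add_ac)
  have "P * (2*q + real k) / (real k + 1) - 1 = (P - 1) + (2*q - 1) * (P / (real k + 1))"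
    by (simp add: field_simps)
  then have "(P * (2*q + real k) / (real k + 1) - 1) / (2*q - 1)
               = (P - 1) / (2*q - 1) + P / (real k + 1)"
    by (simp only: add_divide_distrib nonzero_mult_div_cancel_left[OF q])
  then show ?thesis
    unfolding Hkq_over_k[OF False] P_Suc by (simp add: P_def fact_Suc)
qed

lemma T2_coeff_eq: "T2_coeff q k = Hkq k q / real k * (Ikq k q / real k)"
  by (simp add: T2_coeff_def power2_eq_square)

lemma T2_coeff_Suc_diff:
  assumes "k \<ge> 1"
  shows "T2_coeff q (Suc k) - T2_coeff q k
           = Ikq (Suc k) q / real (Suc k)
               * (pochhammer (2*q) k / fact (Suc k) - q * Hkq k q / (real k)^2)"
proof -
  define b where "b = Ikq (Suc k) q / real (Suc k)"
  define c where "c = Hkq k q / real k"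
  define P where "P = pochhammer (2*q) k / fact (Suc k)"
  have "(real k + q) / real k * b = (real k + q) * Ikq (Suc k) q / (real k * real (Suc k))"
    by (simp add: b_def)
  also have "\<dots> = Ikq k q / real k"
    by (simp only: Ikq_Suc) simp
  finally have "T2_coeff q k = c * ((real k + q) / real k * b)"
    by (simp only: T2_coeff_eq c_def)
  moreover have "T2_coeff q (Suc k) = (c + P) * b"
    unfolding T2_coeff_eq Hkq_Suc_over_Suc b_def c_def P_def ..
  ultimately have "T2_coeff q (Suc k) - T2_coeff q k = b * (P - q * c / real k)"
    using assms by (simp add: field_simps)
  then show ?thesis
    by (simp add: b_def c_def P_def power2_eq_square)
qed

lemma Ikq_Suc_over_Suc_bigo:
  assumes "-1 \<le> q"
  shows "(\<lambda>k. Ikq (Suc k) q / real (Suc k)) \<in> O(\<lambda>k. real k powr (-q))"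
proof -
  have "Ikq (Suc k) q / real (Suc k)
          = rGamma (1 - q) * (Gamma (real k + 1) * rGamma (real k + (q + 1)))" for k
  proof -
    have "Gamma (real k + 1) = fact k"
      using Gamma_fact[of k, where 'a = real] by (simp add: add.commute)
    then show ?thesis by (simp add: Ikq_def add_ac)
  qed
  moreover have "(\<lambda>k. Gamma (real k + 1) * rGamma (real k + (q + 1)))
                   \<in> O(\<lambda>k. real k powr (1 - (q + 1)))"
    using assms by (intro Gamma_times_rGamma_bigo) simp_all
  ultimately show ?thesis by simp
qed

lemma Hkq_over_k_bigo_lt_half:
  assumes "q < 1/2"
  shows "(\<lambda>k. Hkq k q / real k) \<in> O(\<lambda>_. 1)"
proof -
  have "(\<lambda>k. pochhammer (2*q) k / fact k) \<in> O(\<lambda>k. real k powr (2*q - 1))"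
    by (rule pochhammer_over_fact_bigo)
  also have "(\<lambda>k. real k powr (2*q - 1)) \<in> O(\<lambda>_. 1)"
    using assms by real_asymp
  finally have "(\<lambda>k. pochhammer (2*q) k / fact k - 1) \<in> O(\<lambda>_. 1)"
    using landau_o.big_refl by (rule sum_in_bigo(2))
  moreover have "2*q - 1 \<noteq> 0"
    using assms by simp
  ultimately show ?thesis
    using assms by (simp add: Hkq_over_k)
qed

lemma Hkq_over_k_bigo_half: "(\<lambda>k. Hkq k (1/2) / real k) \<in> O(\<lambda>k. ln (real k))"
proof -
  have "(\<lambda>k. harm k - ln (real k)) \<in> O(\<lambda>_. 1)"
    by (intro bigoI_tendsto[where c = euler_mascheroni]) (auto intro: euler_mascheroni_LIMSEQ)
  also have "(\<lambda>_. 1) \<in> O(\<lambda>k. ln (real k))"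
    by real_asymp
  finally have "(\<lambda>k. (harm k - ln (real k)) + ln (real k)) \<in> O(\<lambda>k. ln (real k))"
    using landau_o.big_refl by (rule sum_in_bigo(1))
  then show ?thesis by (simp add: Hkq_half_over_k)
qed

lemma Hkq_over_k_bigo_gt_half:
  assumes "1/2 < q"
  shows "(\<lambda>k. Hkq k q / real k) \<in> O(\<lambda>k. real k powr (2*q - 1))"
proof -
  have "(\<lambda>_. 1) \<in> O(\<lambda>k. real k powr (2*q - 1))"
    using assms by real_asymp
  with pochhammer_over_fact_bigo[of "2*q"]
  have "(\<lambda>k. pochhammer (2*q) k / fact k - 1) \<in> O(\<lambda>k. real k powr (2*q - 1))"
    by (rule sum_in_bigo(2))
  moreover have "2*q - 1 \<noteq> 0"
    using assms by simp
  ultimately show ?thesis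
    using assms by (simp add: Hkq_over_k)
qed

lemma T2_coeff_diff_bigo:
  fixes C T :: "nat \<Rightarrow> real"
  assumes "-1 \<le> q" and H: "(\<lambda>k. Hkq k q / real k) \<in> O(C)"
    and "(\<lambda>k. real k powr (q - 2)) \<in> O(T)"
    and "(\<lambda>k. q * C k * real k powr (-q - 1)) \<in> O(T)"
  shows "(\<lambda>k. T2_coeff q (Suc k) - T2_coeff q k) \<in> O(T)"
proof -
  define b where "b k = Ikq (Suc k) q / real (Suc k)" for k
  have b: "b \<in> O(\<lambda>k. real k powr (-q))"
    unfolding b_def using assms(1) by (rule Ikq_Suc_over_Suc_bigo)
  have P_eq: "pochhammer (2*q) k / fact (Suc k) = pochhammer (2*q) k / fact k * (1 / (real k + 1))"
    for k
    by (simp add: fact_Suc)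
  have "(\<lambda>k. b k * (pochhammer (2*q) k / fact (Suc k)))
          \<in> O(\<lambda>k. real k powr (-q) * (real k powr (2*q - 1) * (1 / (real k + 1))))"
    unfolding P_eq
    by (intro landau_o.big.mult b landau_o.big.mult_right pochhammer_over_fact_bigo)
  also have "(\<lambda>k. real k powr (-q) * (real k powr (2*q - 1) * (1 / (real k + 1))))
               \<in> O(\<lambda>k. real k powr (q - 2))"
    by real_asymp
  also note assms(3)
  finally have first: "(\<lambda>k. b k * (pochhammer (2*q) k / fact (Suc k))) \<in> O(T)" .
  have H_eq: "q * Hkq k q / (real k)^2 = Hkq k q / real k * (q / real k)" for k
    by (simp add: power2_eq_square)
  have C_eq: "(\<lambda>k. real k powr (-q) * (C k * (q / real k)))
                = (\<lambda>k. q * C k * real k powr (-q - 1))"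
  proof
    fix k
    have "real k powr (-q - 1) = real k powr (-q) / real k"
      using powr_diff[of "real k" "-q" 1] by simp
    then show "real k powr (-q) * (C k * (q / real k)) = q * C k * real k powr (-q - 1)"
      by (simp add: mult_ac)
  qed
  have "(\<lambda>k. b k * (q * Hkq k q / (real k)^2))
          \<in> O(\<lambda>k. real k powr (-q) * (C k * (q / real k)))"
    unfolding H_eq by (intro landau_o.big.mult b landau_o.big.mult_right H)
  also note C_eq
  also note assms(4)
  finally have second: "(\<lambda>k. b k * (q * Hkq k q / (real k)^2)) \<in> O(T)" .
  have "(\<lambda>k. b k * (pochhammer (2*q) k / fact (Suc k)) - b k * (q * Hkq k q / (real k)^2))
          \<in> O(T)"
    using first second by (rule sum_in_bigo)
  moreover have ev: "eventually (\<lambda>k. b k * (pochhammer (2*q) k / fact (Suc k))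
                                        - b k * (q * Hkq k q / (real k)^2)
                                      = T2_coeff q (Suc k) - T2_coeff q k) at_top"
    using eventually_ge_at_top[of 1]
    by eventually_elim (simp add: T2_coeff_Suc_diff b_def right_diff_distrib)
  ultimately show ?thesis
    using landau_o.big.in_cong[OF ev] by simp
qed

lemma T2_coeff_alternating_sum_bigo_neg:
  assumes "-1 \<le> q" "q < 0"
  shows "(\<lambda>n. \<Sum>k=1..n. (-1)^(n-k) * T2_coeff q k) \<in> O(\<lambda>n. real n powr (-q))"
proof (rule alternating_sum_bigo)
  have "(\<lambda>k. T2_coeff q (Suc k) - T2_coeff q k) \<in> O(\<lambda>k. real k powr (-q - 1))"
  proof (rule T2_coeff_diff_bigo[OF assms(1) Hkq_over_k_bigo_lt_half])
    show "(\<lambda>k. real k powr (q - 2)) \<in> O(\<lambda>k. real k powr (-q - 1))"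
      using assms by real_asymp
    show "(\<lambda>k. q * 1 * real k powr (-q - 1)) \<in> O(\<lambda>k. real k powr (-q - 1))"
      by real_asymp
  qed (use assms in simp)
  then show "(\<lambda>n. \<Sum>k=1..<n. \<bar>T2_coeff q (Suc k) - T2_coeff q k\<bar>)
               \<in> O(\<lambda>n. real n powr (-q))"
    using assms by (intro partial_sums_abs_bigo_powr) simp_all
  show "(\<lambda>_. 1) \<in> O(\<lambda>n. real n powr (-q))"
    using assms by real_asymp
qed

lemma summable_abs_T2_coeff_diff:
  assumes "0 \<le> q" "q < 1"
  shows "summable (\<lambda>k. \<bar>T2_coeff q (Suc k) - T2_coeff q k\<bar>)"
proof -
  have q: "-1 \<le> q" using assms by simp
  obtain e where "e > 0"
    and diff: "(\<lambda>k. T2_coeff q (Suc k) - T2_coeff q k) \<in> O(\<lambda>k. real k powr (-1 - e))"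
  proof -
    consider "q = 0" | "0 < q" "q < 1/2" | "q = 1/2" | "1/2 < q"
      using assms by linarith
    then show ?thesis
    proof cases
      case 1
      then show ?thesis
        by (intro that[of 1] T2_coeff_diff_bigo[OF q Hkq_over_k_bigo_lt_half]) simp_all
    next
      case 2
      show ?thesis
      proof (intro that[of "q/2"] T2_coeff_diff_bigo[OF q Hkq_over_k_bigo_lt_half])
        show "(\<lambda>k. real k powr (q - 2)) \<in> O(\<lambda>k. real k powr (-1 - q/2))"
          using 2 by real_asymp
        show "(\<lambda>k. q * 1 * real k powr (-q - 1)) \<in> O(\<lambda>k. real k powr (-1 - q/2))"
          using 2 by real_asymp
      qed (use 2 in simp_all)
    next
      case 3
      show ?thesis
      proof (intro that[of "1/4"] T2_coeff_diff_bigo[OF q])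
        show "(\<lambda>k. Hkq k q / real k) \<in> O(\<lambda>k. ln (real k))"
          unfolding 3 by (rule Hkq_over_k_bigo_half)
        show "(\<lambda>k. real k powr (q - 2)) \<in> O(\<lambda>k. real k powr (-1 - 1/4))"
          unfolding 3 by real_asymp
        show "(\<lambda>k. q * ln (real k) * real k powr (-q - 1)) \<in> O(\<lambda>k. real k powr (-1 - 1/4))"
          unfolding 3 by real_asymp
      qed simp
    next
      case 4
      show ?thesis
      proof (intro that[of "1 - q"] T2_coeff_diff_bigo[OF q Hkq_over_k_bigo_gt_half])
        show "(\<lambda>k. real k powr (q - 2)) \<in> O(\<lambda>k. real k powr (-1 - (1 - q)))"
          by real_asymp
        show "(\<lambda>k. q * real k powr (2*q - 1) * real k powr (-q - 1))
                \<in> O(\<lambda>k. real k powr (-1 - (1 - q)))"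
          using 4 by real_asymp
      qed (use 4 assms in simp_all)
    qed
  qed
  have "summable (\<lambda>k. norm (real k powr (-1 - e)))"
    using \<open>e > 0\<close> by (simp add: summable_real_powr_iff)
  moreover from diff
  have "(\<lambda>k. \<bar>T2_coeff q (Suc k) - T2_coeff q k\<bar>) \<in> O(\<lambda>k. real k powr (-1 - e))"
    by simp
  ultimately show ?thesis
    by (rule summable_comparison_test_bigo)
qed

lemma T2_coeff_alternating_sum_bounded:
  assumes "0 \<le> q" "q < 1"
  shows "(\<lambda>n. \<Sum>k=1..n. (-1)^(n-k) * T2_coeff q k) \<in> O(\<lambda>_. 1)"
  using partial_sums_abs_bounded[OF summable_abs_T2_coeff_diff[OF assms]]
  by (rule alternating_sum_bigo) simp

lemma T2_integral_bigo:
  assumes "-1 \<le> q" "q < 1"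
  shows "(\<lambda>n. integral {0..1} (\<lambda>u. u powr (real n + q) * (1 - u) powr (-q) / (1 + u)))
           \<in> O(\<lambda>n. real n powr (q - 1))"
proof -
  define J where "J n = integral {0..1} (\<lambda>u. u powr (real n + q) * (1 - u) powr (-q) / (1 + u))"
    for n
  have "eventually (\<lambda>n. norm (J n) \<le> norm (Beta (real n + q + 1) (1 - q))) at_top"
    using eventually_ge_at_top[of 1]
  proof eventually_elim
    case (elim n)
    then have "real n + q + 1 > 0" "1 - q > 0"
      using assms by linarith+
    from abs_integral_Beta_integrand_div_le[OF this] show ?case
      by (simp add: J_def)
  qed
  then have "J \<in> O(\<lambda>n. Beta (real n + q + 1) (1 - q))"
    by (rule landau_o.big_mono)
  also have "(\<lambda>n. Beta (real n + q + 1) (1 - q))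
               = (\<lambda>n. Gamma (real n + (q + 1)) * rGamma (real n + 2) * Gamma (1 - q))"
    by (simp add: Beta_altdef add_ac mult_ac)
  also have "\<dots> \<in> O(\<lambda>n. real n powr (q + 1 - 2))"
    using Gamma_times_rGamma_bigo[of "q + 1" 2] assms by simp
  finally show ?thesis
    by (simp add: J_def)
qed

lemma T2_bigo:
  assumes "-1 \<le> q" "q < 1"
    and "(\<lambda>n. \<Sum>k=1..n. (-1)^(n-k) * T2_coeff q k) \<in> O(F)"
  shows "(\<lambda>n. T2 n q) \<in> O(\<lambda>n. real n powr (q - 1) * F n)"
  using landau_o.big.mult[OF T2_integral_bigo[OF assms(1,2)] assms(3)]
  by (simp add: T2_def T2_coeff_def mult.assoc)

theorem lemma3p7:
  fixes q :: real
  assumes "-1 \<le> q" and "q < 1"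
  shows "(q < 0 \<longrightarrow> (\<lambda>n. \<bar>T2 n q\<bar>) \<in> O(\<lambda>n. 1 / real n))
       \<and> (q = 0 \<longrightarrow> (\<lambda>n. \<bar>T2 n q\<bar>) \<in> O(\<lambda>n. ln (real n) / real n))
       \<and> (0 < q \<longrightarrow> (\<lambda>n. \<bar>T2 n q\<bar>) \<in> O(\<lambda>n. real n powr (q - 1)))"
proof (intro conjI impI)
  assume "q < 0"
  with assms have "(\<lambda>n. T2 n q) \<in> O(\<lambda>n. real n powr (q - 1) * real n powr (-q))"
    by (intro T2_bigo T2_coeff_alternating_sum_bigo_neg)
  also have "(\<lambda>n. real n powr (q - 1) * real n powr (-q)) \<in> O(\<lambda>n. 1 / real n)"
    by real_asymp
  finally show "(\<lambda>n. \<bar>T2 n q\<bar>) \<in> O(\<lambda>n. 1 / real n)"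
    by simp
next
  assume "q = 0"
  with assms have "(\<lambda>n. T2 n q) \<in> O(\<lambda>n. real n powr (q - 1) * 1)"
    by (intro T2_bigo T2_coeff_alternating_sum_bounded) simp_all
  also have "(\<lambda>n. real n powr (q - 1) * 1) \<in> O(\<lambda>n. ln (real n) / real n)"
    unfolding \<open>q = 0\<close> by real_asymp
  finally show "(\<lambda>n. \<bar>T2 n q\<bar>) \<in> O(\<lambda>n. ln (real n) / real n)"
    by simp
next
  assume "0 < q"
  with assms have "(\<lambda>n. T2 n q) \<in> O(\<lambda>n. real n powr (q - 1) * 1)"
    by (intro T2_bigo T2_coeff_alternating_sum_bounded) simp_all
  then show "(\<lambda>n. \<bar>T2 n q\<bar>) \<in> O(\<lambda>n. real n powr (q - 1))"
    by simp
qed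

end
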